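(* Let $P\subset V$ be a rational polyhedron invariant under translations by elements of a rational linear subspace $L_0$, and let $\sigma\in\Lambda_{\mathbb{Q}}$. Let $p=p(k,\lambda)$ be a quasi-polynomial function on $\mathbb{Z}\oplus\Lambda$ that is polynomial in $\lambda$, let $g\in\Lambda^\wedge_{\mathbb{Q}}$ and set $q(k,\lambda)=g^\lambda p(k,\lambda)$. If the restriction of $g$ to $\Lambda\cap L_0$ is a non-constant character, then $m=q[C_{P,\sigma}]$ satisfies $\mathcal{A}(m)=0$.
   Context: $V$ finite-dimensional real vector space, $\Lambda\subset V$ full-rank lattice, $\Lambda_{\mathbb{Q}}=\Lambda\otimes\mathbb{Q}$; a linear subspace $L_0$ is rational if $L_0\cap\Lambda$ has full rank in $L_0$. Rational polyhedron: finite intersection of half-spaces $\{v:\langle a,v\rangle\ge c\}$, $a\in\mathrm{Hom}(\Lambda,\mathbb{Z})\otimes\mathbb{Q}$, $c\in\mathbb{Q}$. $C_{P,\sigma}=\{(t,tv+\sigma):t>0,v\in P\}$, $[C_{P,\sigma}]$ its indicator on $\mathbb{Z}\oplus\Lambda$. Quasi-polynomials: algebra generated by polynomials and periodic functions on the lattice. $\Lambda^\wedge_{\mathbb{Q}}$: finite-order elements of $\mathrm{Hom}(\Lambda,U(1))$, $g^\lambda=g(\lambda)$. For such $m$, $\Theta(m;k)=\sum_\lambda m(k,\lambda)\delta_{\lambda/k}$ ($k\in\mathbb{Z}_{>0}$), and $\mathcal{A}(m)$ is its asymptotic expansion as $k\to\infty$ (locally, in powers of $k^{-1}$, coefficients periodic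 in $k$); $\mathcal{A}(m)=0$ means all coefficients vanish, equivalently $\langle\Theta(m;k),\varphi\rangle=o(k^{-N})$ for all $\varphi\in C^\infty_c(V)$ and all $N$. *)

theory Defs
  imports "HOL-Analysis.Analysis"
begin

text \<open>Coordinates: V = real^'n, the lattice Lambda = integer points (int^'n),
  embedded into V by lat.\<close>

definition lat :: "int ^ 'n \<Rightarrow> real ^ 'n" where
  "lat l = (\<chi> j. real_of_int (l $ j))"

definition rat_vec :: "real ^ 'n \<Rightarrow> bool" where
  "rat_vec a \<longleftrightarrow> (\<forall>j. a $ j \<in> \<rat>)"

text \<open>Rational linear subspace: L0 \<inter> Lambda has full rank in L0.\<close>
definition rational_subspace :: "(real ^ 'n) set \<Rightarrow> bool" where
  "rational_subspace L0 \<longleftrightarrow> subspace L0 \<and> span (L0 \<inter> range lat) = L0"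

definition rational_polyhedron :: "(real ^ 'n) set \<Rightarrow> bool" where
  "rational_polyhedron P \<longleftrightarrow>
     (\<exists>F. finite F \<and> (\<forall>(a, c) \<in> F. rat_vec a \<and> c \<in> \<rat>) \<and>
          P = {v. \<forall>(a, c) \<in> F. a \<bullet> v \<ge> c})"

definition periodic_int :: "(int \<Rightarrow> complex) \<Rightarrow> bool" where
  "periodic_int f \<longleftrightarrow> (\<exists>N>0. \<forall>k. f (k + N) = f k)"

definition quasi_poly_int :: "(int \<Rightarrow> complex) \<Rightarrow> bool" where
  "quasi_poly_int c \<longleftrightarrow>
     (\<exists>D f. (\<forall>d<D. periodic_int (f d)) \<and>
            (\<forall>k. c k = (\<Sum>d<D. f d k * of_int k ^ d)))"

definition qpoly_poly_in_lambda :: "(int \<Rightarrow> int ^ 'n \<Rightarrow> complex) \<Rightarrow> bool" where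
  "qpoly_poly_in_lambda p \<longleftrightarrow>
     (\<exists>M (c :: nat \<Rightarrow> int \<Rightarrow> complex) (e :: nat \<Rightarrow> 'n \<Rightarrow> nat).
        (\<forall>i<M. quasi_poly_int (c i)) \<and>
        (\<forall>k l. p k l = (\<Sum>i<M. c i k * (\<Prod>j\<in>UNIV. of_int (l $ j) ^ e i j))))"

definition finite_order_character :: "(int ^ 'n \<Rightarrow> complex) \<Rightarrow> bool" where
  "finite_order_character g \<longleftrightarrow>
     (\<forall>a b. g (a + b) = g a * g b) \<and> (\<forall>a. norm (g a) = 1) \<and>
     (\<exists>N::nat. N > 0 \<and> (\<forall>a. g a ^ N = 1))"

definition cone_PS :: "(real ^ 'n) set \<Rightarrow> real ^ 'n \<Rightarrow> (real \<times> (real ^ 'n)) set" where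
  "cone_PS P \<sigma> = {(t, t *\<^sub>R v + \<sigma>) | t v. t > 0 \<and> v \<in> P}"

definition cone_indicator :: "(real ^ 'n) set \<Rightarrow> real ^ 'n \<Rightarrow> int \<Rightarrow> int ^ 'n \<Rightarrow> complex" where
  "cone_indicator P \<sigma> k l = (if (real_of_int k, lat l) \<in> cone_PS P \<sigma> then 1 else 0)"

coinductive smooth_fun :: "('a::euclidean_space \<Rightarrow> complex) \<Rightarrow> bool" where
  "(\<forall>x. f differentiable (at x)) \<Longrightarrow>
   (\<forall>v. smooth_fun (\<lambda>x. frechet_derivative f (at x) v)) \<Longrightarrow> smooth_fun f"

definition test_function :: "(real ^ 'n \<Rightarrow> complex) \<Rightarrow> bool" where
  "test_function \<phi> \<longleftrightarrow> smooth_fun \<phi> \<and> compact (closure {x. \<phi> x \<noteq> 0})"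

text \<open>Pairing of Theta(m;k) = sum_lambda m(k,lambda) delta_{lambda/k} with a test function.\<close>
definition Theta_pair :: "(int \<Rightarrow> int ^ 'n \<Rightarrow> complex) \<Rightarrow> nat \<Rightarrow> (real ^ 'n \<Rightarrow> complex) \<Rightarrow> complex" where
  "Theta_pair m k \<phi> =
     (\<Sum>l\<in>{l. \<phi> ((1 / real k) *\<^sub>R lat l) \<noteq> 0}. m (int k) l * \<phi> ((1 / real k) *\<^sub>R lat l))"

definition asymp_vanishes :: "(int \<Rightarrow> int ^ 'n \<Rightarrow> complex) \<Rightarrow> bool" where
  "asymp_vanishes m \<longleftrightarrow>
     (\<forall>\<phi>. test_function \<phi> \<longrightarrow>
        (\<forall>N::nat. ((\<lambda>k. of_real (real k ^ N) * Theta_pair m k \<phi>) \<longlongrightarrow> 0) sequentially))"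

end

theory Submission
  imports Defs "HOL-Library.Groups_Big_Fun"
begin

text \<open>Choose \<open>\<mu> \<in> \<Lambda> \<inter> L0\<close> with \<open>g\<^sup>\<mu> \<noteq> 1\<close>. As \<open>P\<close> is \<open>L0\<close>-invariant, the weight
  \<open>W(k,\<lambda>) = g\<^sup>\<lambda> [C\<^sub>P\<^sub>,\<^sub>\<sigma>](k,\<lambda>)\<close> satisfies \<open>W(k,\<lambda>+\<mu>) = g\<^sup>\<mu> W(k,\<lambda>)\<close>, so summation by
  parts along \<open>\<mu>\<close> gives \<open>g\<^sup>\<mu> \<langle>\<Theta>(W;k), \<Delta>\<psi>\<rangle> = (g\<^sup>\<mu> - 1) \<langle>\<Theta>(W;k), \<psi>\<rangle>\<close> for the difference
  \<open>\<Delta>\<psi>(x) = \<psi>(x) - \<psi>(x + \<mu>/k)\<close>. Iterating \<open>M\<close> times, as \<open>\<Delta>\<^sup>M\<psi> = O(k\<^sup>-\<^sup>M)\<close> uniformly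
  and only \<open>O(k\<^sup>n)\<close> points \<open>\<lambda>/k\<close> meet its support, \<open>\<langle>\<Theta>(W;k), \<psi>\<rangle> = O(k\<^sup>n\<^sup>-\<^sup>M)\<close> for every \<open>M\<close>.
  A monomial factor in \<open>\<lambda>\<close> is moved into the test function as a monomial in \<open>x = \<lambda>/k\<close>, at the
  cost of a power of \<open>k\<close>, and quasi-polynomial coefficients grow polynomially in \<open>k\<close>.\<close>

definition directional_derivative :: "('a::euclidean_space \<Rightarrow> complex) \<Rightarrow> 'a \<Rightarrow> 'a \<Rightarrow> complex" where
  "directional_derivative f v = (\<lambda>x. frechet_derivative f (at x) v)"

lemma smooth_fun_has_derivative:
  "smooth_fun f \<Longrightarrow> (f has_derivative frechet_derivative f (at x)) (at x)"
  by (erule smooth_fun.cases) (auto simp: frechet_derivative_works[symmetric])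

lemma smooth_fun_directional_derivative:
  "smooth_fun f \<Longrightarrow> smooth_fun (directional_derivative f v)"
  unfolding directional_derivative_def by (erule smooth_fun.cases) auto

lemma smooth_fun_lincomb:
  assumes "smooth_fun f" "smooth_fun g"
  shows "smooth_fun (\<lambda>x. a * f x + b * g x)"
proof -
  let ?X = "\<lambda>F. \<exists>a b f g. smooth_fun f \<and> smooth_fun g \<and> F = (\<lambda>x. a * f x + b * g x)"
  show ?thesis
  proof (rule smooth_fun.coinduct[of ?X])
    show "?X (\<lambda>x. a * f x + b * g x)" using assms by blast
  next
    fix F assume "?X F"
    then obtain a b f g where fg: "smooth_fun f" "smooth_fun g"
      and F: "F = (\<lambda>x. a * f x + b * g x)" by blast
    have F': "(F has_derivative (\<lambda>v. a * directional_derivative f v x + b * directional_derivative g v x)) (at x)" for x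
      unfolding F directional_derivative_def
      by (intro has_derivative_add has_derivative_mult_right smooth_fun_has_derivative fg)
    have "(\<lambda>x. frechet_derivative F (at x) v) = (\<lambda>x. a * directional_derivative f v x + b * directional_derivative g v x)" for v
      using frechet_derivative_at[OF F'] by metis
    then show "\<exists>f. F = f \<and> (\<forall>x. f differentiable at x) \<and>
        (\<forall>v. ?X (\<lambda>x. frechet_derivative f (at x) v) \<or> smooth_fun (\<lambda>x. frechet_derivative f (at x) v))"
      using F' fg smooth_fun_directional_derivative differentiableI by blast
  qed
qed

text \<open>The class of functions \<open>f + \<xi> * g\<close> with \<open>f\<close>, \<open>g\<close> smooth is closed under directional
  derivatives, because the derivative of \<open>\<xi> * g\<close> in direction \<open>v\<close> is \<open>\<xi> v * g + \<xi> * D\<^sub>v g\<close>.\<close>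

lemma smooth_fun_linear_mult:
  fixes \<xi> :: "'a::euclidean_space \<Rightarrow> complex"
  assumes \<xi>: "bounded_linear \<xi>" and f: "smooth_fun f"
  shows "smooth_fun (\<lambda>x. \<xi> x * f x)"
proof -
  let ?X = "\<lambda>F. \<exists>f g. smooth_fun f \<and> smooth_fun g \<and> F = (\<lambda>x. f x + \<xi> x * g x)"
  show ?thesis
  proof (rule smooth_fun.coinduct[of ?X])
    have "smooth_fun (\<lambda>x. 0 * f x + 0 * f x)" using smooth_fun_lincomb[OF f f] .
    then show "?X (\<lambda>x. \<xi> x * f x)" using f by force
  next
    fix F assume "?X F"
    then obtain f g where fg: "smooth_fun f" "smooth_fun g"
      and F: "F = (\<lambda>x. f x + \<xi> x * g x)" by blast
    define f' where "f' v x = 1 * directional_derivative f v x + \<xi> v * g x" for v x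
    have F': "(F has_derivative (\<lambda>v. f' v x + \<xi> x * directional_derivative g v x)) (at x)" for x
    proof -
      have "(F has_derivative (\<lambda>v. directional_derivative f v x +
          (\<xi> x * directional_derivative g v x + \<xi> v * g x))) (at x)"
        unfolding F directional_derivative_def
        by (intro has_derivative_add has_derivative_mult smooth_fun_has_derivative fg
            bounded_linear.has_derivative[OF \<xi>] has_derivative_ident)
      then show ?thesis by (simp add: f'_def algebra_simps)
    qed
    have "(\<lambda>x. frechet_derivative F (at x) v) = (\<lambda>x. f' v x + \<xi> x * directional_derivative g v x)" for v
      using frechet_derivative_at[OF F'] by metis
    moreover have "smooth_fun (f' v)" for v
      unfolding f'_def by (intro smooth_fun_lincomb smooth_fun_directional_derivative fg)
    ultimately show "\<exists>f. F = f \<and> (\<forall>x. f differentiable at x) \<and>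
        (\<forall>v. ?X (\<lambda>x. frechet_derivative f (at x) v) \<or> smooth_fun (\<lambda>x. frechet_derivative f (at x) v))"
      using F' fg smooth_fun_directional_derivative differentiableI by blast
  qed
qed

lemma test_functionI_support_subset:
  assumes "smooth_fun \<psi>" "test_function \<phi>" "{x. \<psi> x \<noteq> 0} \<subseteq> closure {x. \<phi> x \<noteq> 0}"
  shows "test_function \<psi>"
proof -
  have "closure {x. \<psi> x \<noteq> 0} \<subseteq> closure {x. \<phi> x \<noteq> 0}"
    using assms(3) by (intro closure_minimal) auto
  with assms(2) have "bounded (closure {x. \<psi> x \<noteq> 0})"
    unfolding test_function_def using bounded_subset compact_imp_bounded by blast
  with assms(1) show ?thesis
    unfolding test_function_def compact_eq_bounded_closed by simp
qed

lemma test_function_linear_mult: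
  assumes "bounded_linear \<xi>" "test_function \<phi>"
  shows "test_function (\<lambda>x. \<xi> x * \<phi> x)"
proof (rule test_functionI_support_subset[OF _ assms(2)])
  show "smooth_fun (\<lambda>x. \<xi> x * \<phi> x)"
    using assms smooth_fun_linear_mult test_function_def by blast
  show "{x. \<xi> x * \<phi> x \<noteq> 0} \<subseteq> closure {x. \<phi> x \<noteq> 0}"
    using closure_subset by fastforce
qed

lemma test_function_monomial_mult:
  fixes \<phi> :: "real ^ 'n \<Rightarrow> complex"
  assumes "finite J" "test_function \<phi>"
  shows "test_function (\<lambda>x. (\<Prod>j\<in>J. complex_of_real (x $ j) ^ e j) * \<phi> x)"
  using assms(1)
proof induction
  case empty
  then show ?case using assms(2) by simp
next
  case (insert a J)
  have coord: "bounded_linear (\<lambda>x::real ^ 'n. complex_of_real (x $ a))"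
    by (intro bounded_linear_compose[OF bounded_linear_of_real] bounded_linear_vec_nth)
  have "test_function (\<lambda>x. complex_of_real (x $ a) ^ i * ((\<Prod>j\<in>J. complex_of_real (x $ j) ^ e j) * \<phi> x))" for i
  proof (induction i)
    case 0
    then show ?case using insert.IH by simp
  next
    case (Suc i)
    then show ?case
      using test_function_linear_mult[OF coord Suc] by (simp add: mult.assoc)
  qed
  then show ?case using insert.hyps by (simp add: mult.assoc)
qed

lemma test_function_directional_derivative:
  assumes "test_function \<phi>"
  shows "test_function (directional_derivative \<phi> v)"
proof (rule test_functionI_support_subset[OF _ assms])
  show "smooth_fun (directional_derivative \<phi> v)"
    using assms smooth_fun_directional_derivative test_function_def by blast
  show "{x. directional_derivative \<phi> v x \<noteq> 0} \<subseteq> closure {x. \<phi> x \<noteq> 0}"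
  proof (rule subsetI, rule ccontr)
    fix x assume x: "x \<in> {x. directional_derivative \<phi> v x \<noteq> 0}" "x \<notin> closure {x. \<phi> x \<noteq> 0}"
    let ?U = "- closure {x. \<phi> x \<noteq> 0}"
    have vanish: "0 = \<phi> y" if "y \<in> ?U" for y
      using that closure_subset[of "{x. \<phi> x \<noteq> 0}"] by auto
    have "(\<phi> has_derivative (\<lambda>v. 0)) (at x)"
      using has_derivative_transform_within_open[OF has_derivative_const open_Compl[OF closed_closure] _ vanish] x(2)
      by simp
    then have "directional_derivative \<phi> v x = 0"
      unfolding directional_derivative_def by (simp add: frechet_derivative_at[symmetric])
    with x(1) show False by simp
  qed
qed

lemma test_function_bounded:
  assumes "test_function \<phi>"
  obtains C where "\<And>x. norm (\<phi> x) \<le> C"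
proof -
  let ?K = "closure {x. \<phi> x \<noteq> 0}"
  have "continuous_on ?K \<phi>"
    using assms smooth_fun_has_derivative has_derivative_continuous
    by (metis test_function_def continuous_at_imp_continuous_on)
  moreover have "compact ?K"
    using assms test_function_def by blast
  ultimately have "bounded (insert 0 (\<phi> ` ?K))"
    by (simp add: compact_continuous_image compact_imp_bounded)
  moreover have "\<phi> x \<in> insert 0 (\<phi> ` ?K)" for x
    using closure_subset by fastforce
  ultimately show ?thesis
    using that unfolding bounded_iff by blast
qed

lemma test_function_support_cball:
  assumes "test_function \<phi>"
  obtains R where "R \<ge> 0" "{x. \<phi> x \<noteq> 0} \<subseteq> cball 0 R"
proof -
  have "bounded {x. \<phi> x \<noteq> 0}"
    using assms compact_imp_bounded bounded_subset closure_subset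
    unfolding test_function_def by metis
  then obtain R where "\<forall>x\<in>{x. \<phi> x \<noteq> 0}. norm x \<le> R"
    unfolding bounded_iff by blast
  then have "{x. \<phi> x \<noteq> 0} \<subseteq> cball 0 (max R 0)"
    by (force simp: subset_iff)
  then show ?thesis
    using that[of "max R 0"] by simp
qed

lemma support_translate_subset_cball:
  fixes \<psi> :: "'a::real_normed_vector \<Rightarrow> 'b::zero"
  assumes "{x. \<psi> x \<noteq> 0} \<subseteq> cball 0 R"
  shows "{x. \<psi> (x + w) \<noteq> 0} \<subseteq> cball 0 (R + norm w)"
proof
  fix x assume "x \<in> {x. \<psi> (x + w) \<noteq> 0}"
  then have "norm (x + w) \<le> R"
    using assms by auto
  then show "x \<in> cball 0 (R + norm w)"
    using norm_triangle_ineq4[of "x + w" w] by simp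
qed

definition fdiff :: "'a::real_normed_vector \<Rightarrow> ('a \<Rightarrow> complex) \<Rightarrow> 'a \<Rightarrow> complex" where
  "fdiff w f x = f x - f (x + w)"

lemma fdiff_pow_Suc: "(fdiff w ^^ Suc M) f x = (fdiff w ^^ M) f x - (fdiff w ^^ M) f (x + w)"
  by (simp add: fdiff_def)

lemma fdiff_pow_has_derivative:
  assumes "\<And>y. (f has_derivative f' y) (at y)"
  shows "((fdiff w ^^ M) f has_derivative (\<lambda>v. (fdiff w ^^ M) (\<lambda>z. f' z v) y)) (at y)"
proof (induction M arbitrary: y)
  case 0
  then show ?case using assms by simp
next
  case (Suc M)
  have "((\<lambda>x. (fdiff w ^^ M) f (x + w)) has_derivative (\<lambda>v. (fdiff w ^^ M) (\<lambda>z. f' z v) (y + w))) (at y)"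
    using has_derivative_compose[OF has_derivative_add_const[OF has_derivative_ident] Suc.IH] by simp
  from has_derivative_diff[OF Suc.IH this] show ?case
    unfolding fdiff_pow_Suc .
qed

lemma fdiff_pow_mult_left: "(fdiff w ^^ M) (\<lambda>z. c * f z) y = c * (fdiff w ^^ M) f y"
  by (induction M arbitrary: y) (simp_all only: funpow_0 fdiff_pow_Suc right_diff_distrib)

lemma fdiff_pow_support:
  assumes "{x. f x \<noteq> 0} \<subseteq> cball 0 R"
  shows "{x. (fdiff w ^^ M) f x \<noteq> 0} \<subseteq> cball 0 (R + real M * norm w)"
proof (induction M)
  case 0
  then show ?case using assms by simp
next
  case (Suc M)
  show ?case
  proof (rule subsetI)
    fix x assume "x \<in> {x. (fdiff w ^^ Suc M) f x \<noteq> 0}"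
    then have "(fdiff w ^^ M) f x \<noteq> 0 \<or> (fdiff w ^^ M) f (x + w) \<noteq> 0"
      using fdiff_pow_Suc[where w=w and M=M and f=f and x=x] by auto
    then have "x \<in> cball 0 (R + real M * norm w) \<or> x \<in> cball 0 (R + real M * norm w + norm w)"
      using Suc.IH support_translate_subset_cball[OF Suc.IH, of w] by blast
    moreover have "cball 0 (R + real M * norm w) \<subseteq> cball 0 (R + real M * norm w + norm w)"
      by (rule subset_cball) simp
    ultimately have "x \<in> cball 0 (R + real M * norm w + norm w)"
      by blast
    then show "x \<in> cball 0 (R + real (Suc M) * norm w)"
      by (simp add: algebra_simps)
  qed
qed

lemma norm_fdiff_le:
  assumes f': "\<And>y. (f has_derivative f' y) (at y)" and B: "\<And>y. norm (f' y w) \<le> B"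
  shows "norm (fdiff w f x) \<le> B"
proof -
  have "((\<lambda>t. x + t *\<^sub>R w) has_derivative (\<lambda>s. s *\<^sub>R w)) (at t)" for t :: real
    using has_derivative_add[OF has_derivative_const has_derivative_scaleR_left[OF has_derivative_ident]]
    by simp
  note line = has_derivative_compose[OF this f']
  have "continuous_on {0..1} (\<lambda>t. f (x + t *\<^sub>R w))"
    by (rule has_derivative_continuous_on, rule has_derivative_at_withinI, rule line)
  from mvt_general[OF zero_less_one this line]
  obtain t where "norm (f (x + 1 *\<^sub>R w) - f (x + 0 *\<^sub>R w)) \<le> norm (f' (x + t *\<^sub>R w) ((1 - 0) *\<^sub>R w))"
    by blast
  with B[of "x + t *\<^sub>R w"] show ?thesis
    by (simp add: fdiff_def norm_minus_commute)
qed

lemma fdiff_pow_bound: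
  fixes \<psi> :: "real ^ 'n \<Rightarrow> complex"
  assumes "test_function \<psi>"
  obtains C where "\<And>h x. norm ((fdiff (h *\<^sub>R u) ^^ M) \<psi> x) \<le> C * \<bar>h\<bar> ^ M"
  using assms
proof (induction M arbitrary: \<psi> thesis)
  case 0
  then show ?case using test_function_bounded by (metis funpow_0 mult.right_neutral power_0)
next
  case (Suc M)
  obtain C where C: "\<And>h x. norm ((fdiff (h *\<^sub>R u) ^^ M) (directional_derivative \<psi> u) x) \<le> C * \<bar>h\<bar> ^ M"
    using Suc.IH[OF _ test_function_directional_derivative[OF Suc.prems(2)]] by blast
  have \<psi>': "\<And>y. (\<psi> has_derivative frechet_derivative \<psi> (at y)) (at y)"
    using Suc.prems(2) smooth_fun_has_derivative test_function_def by blast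
  have "norm ((fdiff (h *\<^sub>R u) ^^ Suc M) \<psi> x) \<le> C * \<bar>h\<bar> ^ Suc M" for h x
  proof -
    have "frechet_derivative \<psi> (at z) (h *\<^sub>R u) = h * directional_derivative \<psi> u z" for z
      using linear_scale[OF has_derivative_linear[OF \<psi>']]
      by (simp add: directional_derivative_def scaleR_conv_of_real)
    then have "(fdiff (h *\<^sub>R u) ^^ M) (\<lambda>z. frechet_derivative \<psi> (at z) (h *\<^sub>R u)) y
        = h * (fdiff (h *\<^sub>R u) ^^ M) (directional_derivative \<psi> u) y" for y
      by (simp add: fdiff_pow_mult_left)
    then have "norm ((fdiff (h *\<^sub>R u) ^^ M) (\<lambda>z. frechet_derivative \<psi> (at z) (h *\<^sub>R u)) y)
        \<le> C * \<bar>h\<bar> ^ Suc M" for y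
      using mult_left_mono[OF C[of h y], of "\<bar>h\<bar>"] by (simp add: norm_mult algebra_simps)
    then have "norm (fdiff (h *\<^sub>R u) ((fdiff (h *\<^sub>R u) ^^ M) \<psi>) x) \<le> C * \<bar>h\<bar> ^ Suc M"
      by (rule norm_fdiff_le[OF fdiff_pow_has_derivative[OF \<psi>']])
    then show ?thesis by simp
  qed
  then show ?case using Suc.prems(1) by blast
qed

lemma lat_add [simp]: "lat (a + b) = lat a + lat b"
  by (simp add: lat_def vec_eq_iff)

lemma lat_diff [simp]: "lat (a - b) = lat a - lat b"
  by (simp add: lat_def vec_eq_iff)

lemma lattice_points_in_ball_subset:
  "{l :: int ^ 'n. norm (lat l) \<le> B} \<subseteq> (\<lambda>f. \<chi> j. f j) ` PiE UNIV (\<lambda>_. {-\<lfloor>B\<rfloor>..\<lfloor>B\<rfloor>})"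
proof
  fix l :: "int ^ 'n" assume "l \<in> {l. norm (lat l) \<le> B}"
  then have "real_of_int \<bar>l $ j\<bar> \<le> B" for j
    using component_le_norm_cart[of "lat l" j] by (simp add: lat_def)
  then have "\<bar>l $ j\<bar> \<le> \<lfloor>B\<rfloor>" for j
    by (simp add: le_floor_iff)
  then have "(\<lambda>j. l $ j) \<in> PiE UNIV (\<lambda>_. {-\<lfloor>B\<rfloor>..\<lfloor>B\<rfloor>})"
    by (simp add: abs_le_iff minus_le_iff PiE_iff)
  then show "l \<in> (\<lambda>f. \<chi> j. f j) ` PiE UNIV (\<lambda>_. {-\<lfloor>B\<rfloor>..\<lfloor>B\<rfloor>})"
    by (intro image_eqI[of l]) auto
qed

lemma finite_lattice_points_in_ball: "finite {l :: int ^ 'n. norm (lat l) \<le> B}"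
  by (rule finite_subset[OF lattice_points_in_ball_subset]) (intro finite_imageI finite_PiE; simp)

lemma card_lattice_points_in_ball:
  assumes "B \<ge> 0"
  shows "real (card {l :: int ^ 'n. norm (lat l) \<le> B}) \<le> (2 * B + 1) ^ CARD('n)"
proof -
  have "card {l :: int ^ 'n. norm (lat l) \<le> B} \<le> card (PiE (UNIV :: 'n set) (\<lambda>_. {-\<lfloor>B\<rfloor>..\<lfloor>B\<rfloor>}))"
    by (rule order_trans[OF card_mono[OF _ lattice_points_in_ball_subset] card_image_le])
      (intro finite_imageI finite_PiE; simp)+
  also have "\<dots> = nat (2 * \<lfloor>B\<rfloor> + 1) ^ CARD('n)"
    by (simp add: card_PiE)
  finally have "real (card {l :: int ^ 'n. norm (lat l) \<le> B}) \<le> real (nat (2 * \<lfloor>B\<rfloor> + 1)) ^ CARD('n)"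
    by (metis of_nat_le_iff of_nat_power)
  also have "\<dots> \<le> (2 * B + 1) ^ CARD('n)"
    using assms by (intro power_mono) linarith+
  finally show ?thesis .
qed

lemma finite_lattice_support:
  assumes "{x. \<psi> x \<noteq> 0} \<subseteq> cball 0 R" "k > 0"
  shows "finite {l. \<psi> ((1 / real k) *\<^sub>R lat l) \<noteq> 0}"
proof (rule finite_subset[OF _ finite_lattice_points_in_ball])
  show "{l. \<psi> ((1 / real k) *\<^sub>R lat l) \<noteq> 0} \<subseteq> {l. norm (lat l) \<le> real k * R}"
    using assms by (auto simp: subset_iff field_simps)
qed

lemma Theta_pair_eq_Sum_any:
  assumes "{x. \<psi> x \<noteq> 0} \<subseteq> cball 0 R" "k > 0"
  shows "Theta_pair m k \<psi> = Sum_any (\<lambda>l. m (int k) l * \<psi> ((1 / real k) *\<^sub>R lat l))"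
  unfolding Theta_pair_def
  by (rule Sum_any.expand_superset[OF finite_lattice_support[OF assms], symmetric]) auto

lemma Theta_pair_sum: "Theta_pair (\<lambda>k l. \<Sum>i\<in>I. m i k l) k \<phi> = (\<Sum>i\<in>I. Theta_pair (m i) k \<phi>)"
  unfolding Theta_pair_def sum_distrib_right by (rule sum.swap)

lemma Theta_pair_mult_left: "Theta_pair (\<lambda>k l. c k * m k l) k \<phi> = c (int k) * Theta_pair m k \<phi>"
  unfolding Theta_pair_def by (simp only: sum_distrib_left mult.assoc)

lemma Theta_pair_monomial_mult:
  fixes \<phi> :: "real ^ 'n \<Rightarrow> complex"
  assumes R: "{x. \<phi> x \<noteq> 0} \<subseteq> cball 0 R" and "k > 0"
  shows "Theta_pair (\<lambda>k l. (\<Prod>j\<in>UNIV. of_int (l $ j) ^ e j) * m k l) k \<phi>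
    = of_nat k ^ (\<Sum>j\<in>UNIV. e j) * Theta_pair m k (\<lambda>x. (\<Prod>j\<in>UNIV. complex_of_real (x $ j) ^ e j) * \<phi> x)"
proof -
  define \<phi>' where "\<phi>' x = (\<Prod>j\<in>UNIV. complex_of_real (x $ j) ^ e j) * \<phi> x" for x
  have R': "{x. \<phi>' x \<noteq> 0} \<subseteq> cball 0 R"
    using R by (auto simp: \<phi>'_def)
  have coord: "complex_of_int (l $ j) = of_nat k * complex_of_real (((1 / real k) *\<^sub>R lat l) $ j)" for l :: "int ^ 'n" and j
  proof -
    have "real k * ((1 / real k) *\<^sub>R lat l) $ j = real_of_int (l $ j)"
      using assms(2) by (simp add: lat_def)
    then show ?thesis by (metis of_real_mult of_real_of_int_eq of_real_of_nat_eq)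
  qed
  have fin: "finite {l. m (int k) l * \<phi>' ((1 / real k) *\<^sub>R lat l) \<noteq> 0}"
    by (rule finite_subset[OF _ finite_lattice_support[OF R' assms(2)]]) auto
  have summand: "(\<Prod>j\<in>UNIV. of_int (l $ j) ^ e j) * m (int k) l * \<phi> ((1 / real k) *\<^sub>R lat l)
      = of_nat k ^ (\<Sum>j\<in>UNIV. e j) * (m (int k) l * \<phi>' ((1 / real k) *\<^sub>R lat l))" for l
    by (simp only: coord \<phi>'_def power_mult_distrib prod.distrib power_sum ac_simps)
  have \<phi>'_eq: "(\<lambda>x. (\<Prod>j\<in>UNIV. complex_of_real (x $ j) ^ e j) * \<phi> x) = \<phi>'"
    by (simp add: \<phi>'_def fun_eq_iff)
  show ?thesis
    unfolding \<phi>'_eq Theta_pair_eq_Sum_any[OF R assms(2)] Theta_pair_eq_Sum_any[OF R' assms(2)]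
      Sum_any_right_distrib[OF fin]
    by (simp only: summand)
qed

text \<open>Summation by parts: reindexing by \<open>l \<mapsto> l + \<mu>\<close> turns the translate of \<open>\<psi>\<close> by
  \<open>lat \<mu> / k\<close> into the factor \<open>\<zeta>\<close>.\<close>

lemma Theta_pair_fdiff:
  fixes W :: "int \<Rightarrow> int ^ 'n \<Rightarrow> complex"
  assumes W: "\<And>l. W (int k) (l + \<mu>) = \<zeta> * W (int k) l"
    and supp: "{x. \<psi> x \<noteq> 0} \<subseteq> cball 0 R" and k: "k > 0"
  shows "\<zeta> * Theta_pair W k (fdiff ((1 / real k) *\<^sub>R lat \<mu>) \<psi>) = (\<zeta> - 1) * Theta_pair W k \<psi>"
proof -
  define x :: "int ^ 'n \<Rightarrow> real ^ 'n" where "x l = (1 / real k) *\<^sub>R lat l" for l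
  define w where "w = (1 / real k) *\<^sub>R lat \<mu>"
  define H where "H l = W (int k) l * \<psi> (x l)" for l
  define H' where "H' l = W (int k) l * \<psi> (x l + w)" for l
  define D where "D l = W (int k) l * fdiff w \<psi> (x l)" for l
  have x_shift: "x (l + \<mu>) = x l + w" for l
    by (simp add: x_def w_def scaleR_add_right)
  have supp_fdiff: "{y. fdiff w \<psi> y \<noteq> 0} \<subseteq> cball 0 (R + norm w)"
    using fdiff_pow_support[OF supp, where w=w and M=1] by simp
  from finite_lattice_support[OF support_translate_subset_cball[OF supp] k]
  have fin_H': "finite {l. H' l \<noteq> 0}"
    by (rule rev_finite_subset) (auto simp: H'_def x_def)
  have fin_D: "finite {l. D l \<noteq> 0}"
    by (rule finite_subset[OF _ finite_lattice_support[OF supp_fdiff k]]) (auto simp: D_def x_def)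
  have "H \<circ> (\<lambda>l. l + \<mu>) = (\<lambda>l. \<zeta> * H' l)"
    by (simp add: fun_eq_iff H_def H'_def W x_shift)
  then have "Sum_any H = Sum_any (\<lambda>l. \<zeta> * H' l)"
    by (rule Sum_any.reindex_cong[OF bij_plus_right])
  also have "\<dots> = \<zeta> * Sum_any H'"
    by (rule Sum_any_right_distrib[OF fin_H', symmetric])
  finally have H_shift: "Sum_any H = \<zeta> * Sum_any H'" .
  have "H = (\<lambda>l. D l + H' l)"
    by (simp add: fun_eq_iff H_def H'_def D_def fdiff_def algebra_simps)
  then have H_split: "Sum_any H = Sum_any D + Sum_any H'"
    using Sum_any.distrib[OF fin_D fin_H'] by simp
  have "\<zeta> * Sum_any D = (\<zeta> - 1) * Sum_any H"
    using H_shift H_split by algebra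
  then have "\<zeta> * Theta_pair W k (fdiff w \<psi>) = (\<zeta> - 1) * Theta_pair W k \<psi>"
    unfolding Theta_pair_eq_Sum_any[OF supp k] Theta_pair_eq_Sum_any[OF supp_fdiff k]
    by (simp only: D_def[abs_def] H_def[abs_def] x_def[abs_def])
  then show ?thesis
    by (simp only: w_def)
qed

lemma Theta_pair_fdiff_pow:
  fixes W :: "int \<Rightarrow> int ^ 'n \<Rightarrow> complex"
  assumes W: "\<And>l. W (int k) (l + \<mu>) = \<zeta> * W (int k) l"
    and supp: "{x. \<psi> x \<noteq> 0} \<subseteq> cball 0 R" and k: "k > 0"
  shows "\<zeta> ^ M * Theta_pair W k ((fdiff ((1 / real k) *\<^sub>R lat \<mu>) ^^ M) \<psi>) = (\<zeta> - 1) ^ M * Theta_pair W k \<psi>"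
proof (induction M)
  case 0
  then show ?case by simp
next
  case (Suc M)
  let ?w = "(1 / real k) *\<^sub>R lat \<mu>"
  have "\<zeta> * Theta_pair W k (fdiff ?w ((fdiff ?w ^^ M) \<psi>)) = (\<zeta> - 1) * Theta_pair W k ((fdiff ?w ^^ M) \<psi>)"
    by (rule Theta_pair_fdiff[where W=W and k=k, OF W fdiff_pow_support[OF supp] k])
  then have "\<zeta> ^ Suc M * Theta_pair W k ((fdiff ?w ^^ Suc M) \<psi>)
      = (\<zeta> - 1) * (\<zeta> ^ M * Theta_pair W k ((fdiff ?w ^^ M) \<psi>))"
    by (simp add: ac_simps)
  then show ?case
    by (simp add: Suc.IH)
qed

lemma norm_Theta_pair_le:
  fixes W :: "int \<Rightarrow> int ^ 'n \<Rightarrow> complex"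
  assumes W: "\<And>l. norm (W (int k) l) \<le> 1"
    and supp: "{x. \<psi> x \<noteq> 0} \<subseteq> cball 0 R" and bound: "\<And>x. norm (\<psi> x) \<le> B"
    and k: "k \<ge> 1" and R: "R \<ge> 0"
  shows "norm (Theta_pair W k \<psi>) \<le> (real k * (2 * R + 1)) ^ CARD('n) * B"
proof -
  let ?S = "{l :: int ^ 'n. \<psi> ((1 / real k) *\<^sub>R lat l) \<noteq> 0}"
  let ?A = "{l :: int ^ 'n. norm (lat l) \<le> real k * R}"
  have B: "B \<ge> 0"
    using norm_ge_zero bound order_trans by blast
  have "?S \<subseteq> ?A"
    using supp k by (auto simp: subset_iff field_simps)
  then have "card ?S \<le> card ?A"
    by (rule card_mono[OF finite_lattice_points_in_ball])
  have "norm (Theta_pair W k \<psi>) \<le> (\<Sum>l\<in>?S. norm (W (int k) l * \<psi> ((1 / real k) *\<^sub>R lat l)))"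
    unfolding Theta_pair_def by (rule norm_sum)
  also have "\<dots> \<le> real (card ?S) * B"
  proof (rule sum_bounded_above)
    fix l
    have "norm (W (int k) l) * norm (\<psi> ((1 / real k) *\<^sub>R lat l)) \<le> 1 * B"
      by (rule mult_mono[OF W bound]) simp_all
    then show "norm (W (int k) l * \<psi> ((1 / real k) *\<^sub>R lat l)) \<le> B"
      by (simp add: norm_mult)
  qed
  also have "\<dots> \<le> real (card ?A) * B"
    using \<open>card ?S \<le> card ?A\<close> B by (intro mult_right_mono) simp_all
  also have "\<dots> \<le> (2 * (real k * R) + 1) ^ CARD('n) * B"
    using R B by (intro mult_right_mono card_lattice_points_in_ball) simp_all
  also have "\<dots> \<le> (real k * (2 * R + 1)) ^ CARD('n) * B"
    using R B k by (intro mult_right_mono power_mono) (simp_all add: algebra_simps)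
  finally show ?thesis .
qed

lemma asymp_vanishesI:
  "(\<And>\<phi> N. test_function \<phi> \<Longrightarrow> ((\<lambda>k. of_real (real k ^ N) * Theta_pair m k \<phi>) \<longlongrightarrow> 0) sequentially)
    \<Longrightarrow> asymp_vanishes m"
  by (simp add: asymp_vanishes_def)

lemma asymp_vanishesD:
  "asymp_vanishes m \<Longrightarrow> test_function \<phi> \<Longrightarrow> ((\<lambda>k. of_real (real k ^ N) * Theta_pair m k \<phi>) \<longlongrightarrow> 0) sequentially"
  by (simp add: asymp_vanishes_def)

lemma asymp_vanishes_mult_left:
  fixes m :: "int \<Rightarrow> int ^ 'n \<Rightarrow> complex"
  assumes m: "asymp_vanishes m" and c: "\<And>k::nat. k \<ge> 1 \<Longrightarrow> norm (c (int k)) \<le> B * real k ^ D"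
  shows "asymp_vanishes (\<lambda>k l. c k * m k l)"
proof (rule asymp_vanishesI)
  fix \<phi> :: "real ^ 'n \<Rightarrow> complex" and N :: nat
  assume \<phi>: "test_function \<phi>"
  have "norm (of_real (real k ^ N) * Theta_pair (\<lambda>k l. c k * m k l) k \<phi>)
      \<le> B * norm (of_real (real k ^ (N + D)) * Theta_pair m k \<phi>)" if "k \<ge> 1" for k
  proof -
    have "norm (of_real (real k ^ N) * Theta_pair (\<lambda>k l. c k * m k l) k \<phi>)
        = real k ^ N * norm (c (int k)) * norm (Theta_pair m k \<phi>)"
      by (simp only: Theta_pair_mult_left norm_mult norm_of_real abs_of_nonneg[OF zero_le_power[OF of_nat_0_le_iff]] mult.assoc)
    also have "\<dots> \<le> real k ^ N * (B * real k ^ D) * norm (Theta_pair m k \<phi>)"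
      using c[OF that] by (intro mult_right_mono mult_left_mono) simp_all
    also have "\<dots> = B * norm (of_real (real k ^ (N + D)) * Theta_pair m k \<phi>)"
      by (simp add: norm_mult norm_power power_add)
    finally show ?thesis .
  qed
  moreover have "((\<lambda>k. B * norm (of_real (real k ^ (N + D)) * Theta_pair m k \<phi>)) \<longlongrightarrow> 0) sequentially"
    by (intro tendsto_mult_right_zero tendsto_norm_zero asymp_vanishesD[OF m \<phi>])
  ultimately show "((\<lambda>k. of_real (real k ^ N) * Theta_pair (\<lambda>k l. c k * m k l) k \<phi>) \<longlongrightarrow> 0) sequentially"
    by (rule Lim_null_comparison[OF eventually_sequentiallyI])
qed

lemma asymp_vanishes_sum:
  fixes m :: "'i \<Rightarrow> int \<Rightarrow> int ^ 'n \<Rightarrow> complex"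
  assumes "\<And>i. i \<in> I \<Longrightarrow> asymp_vanishes (m i)"
  shows "asymp_vanishes (\<lambda>k l. \<Sum>i\<in>I. m i k l)"
proof (rule asymp_vanishesI)
  fix \<phi> :: "real ^ 'n \<Rightarrow> complex" and N :: nat
  assume "test_function \<phi>"
  then show "((\<lambda>k. of_real (real k ^ N) * Theta_pair (\<lambda>k l. \<Sum>i\<in>I. m i k l) k \<phi>) \<longlongrightarrow> 0) sequentially"
    unfolding Theta_pair_sum sum_distrib_left
    by (intro tendsto_null_sum asymp_vanishesD[OF assms])
qed

lemma asymp_vanishes_monomial_mult:
  fixes m :: "int \<Rightarrow> int ^ 'n \<Rightarrow> complex"
  assumes m: "asymp_vanishes m"
  shows "asymp_vanishes (\<lambda>k l. (\<Prod>j\<in>UNIV. of_int (l $ j) ^ e j) * m k l)"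
proof (rule asymp_vanishesI)
  fix \<phi> :: "real ^ 'n \<Rightarrow> complex" and N :: nat
  assume \<phi>: "test_function \<phi>"
  obtain R where R: "{x. \<phi> x \<noteq> 0} \<subseteq> cball 0 R"
    using test_function_support_cball[OF \<phi>] by blast
  define \<phi>' where "\<phi>' x = (\<Prod>j\<in>UNIV. complex_of_real (x $ j) ^ e j) * \<phi> x" for x
  have "test_function \<phi>'"
    unfolding \<phi>'_def[abs_def] by (rule test_function_monomial_mult[OF _ \<phi>]) simp
  then have "((\<lambda>k. of_real (real k ^ (N + (\<Sum>j\<in>UNIV. e j))) * Theta_pair m k \<phi>') \<longlongrightarrow> 0) sequentially"
    by (rule asymp_vanishesD[OF m])
  moreover have "of_real (real k ^ (N + (\<Sum>j\<in>UNIV. e j))) * Theta_pair m k \<phi>'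
      = of_real (real k ^ N) * Theta_pair (\<lambda>k l. (\<Prod>j\<in>UNIV. of_int (l $ j) ^ e j) * m k l) k \<phi>"
    if "k > 0" for k
  proof -
    have "Theta_pair (\<lambda>k l. (\<Prod>j\<in>UNIV. of_int (l $ j) ^ e j) * m k l) k \<phi>
        = of_nat k ^ (\<Sum>j\<in>UNIV. e j) * Theta_pair m k \<phi>'"
      unfolding \<phi>'_def[abs_def] by (rule Theta_pair_monomial_mult[OF R that])
    then show ?thesis
      by (simp add: power_add)
  qed
  then have "\<forall>\<^sub>F k in sequentially. of_real (real k ^ (N + (\<Sum>j\<in>UNIV. e j))) * Theta_pair m k \<phi>'
      = of_real (real k ^ N) * Theta_pair (\<lambda>k l. (\<Prod>j\<in>UNIV. of_int (l $ j) ^ e j) * m k l) k \<phi>"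
    by (intro eventually_sequentiallyI[of 1]) simp
  ultimately show "((\<lambda>k. of_real (real k ^ N) * Theta_pair (\<lambda>k l. (\<Prod>j\<in>UNIV. of_int (l $ j) ^ e j) * m k l) k \<phi>) \<longlongrightarrow> 0) sequentially"
    by (rule Lim_transform_eventually)
qed

lemma periodic_int_mod:
  fixes f :: "int \<Rightarrow> 'a" and N :: int
  assumes "N > 0" "\<And>k. f (k + N) = f k"
  shows "f k = f (k mod N)"
proof -
  have shift: "f (r + int j * N) = f r" for r and j :: nat
  proof (induction j)
    case (Suc j)
    have "f (r + int (Suc j) * N) = f ((r + int j * N) + N)"
      by (simp add: algebra_simps)
    then show ?case
      by (simp only: assms(2) Suc.IH)
  qed simp
  show ?thesis
  proof (cases "k div N \<ge> 0")
    case True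
    then show ?thesis
      using shift[of "k mod N" "nat (k div N)"] by simp
  next
    case False
    then show ?thesis
      using shift[of k "nat (- (k div N))"] by (simp add: minus_div_mult_eq_mod[symmetric])
  qed
qed

lemma periodic_int_bounded:
  assumes "periodic_int f"
  obtains B where "\<And>k. norm (f k) \<le> B"
proof -
  obtain N where N: "N > 0" "\<And>k. f (k + N) = f k"
    using assms unfolding periodic_int_def by blast
  have "norm (f k) \<le> (\<Sum>r\<in>{0..<N}. norm (f r))" for k
    unfolding periodic_int_mod[where f=f, OF N, of k]
    by (rule member_le_sum[where f="\<lambda>r. norm (f r)"]) (use N(1) in auto)
  then show ?thesis using that by blast
qed

lemma quasi_poly_int_bounded:
  assumes "quasi_poly_int c"
  obtains B D where "\<And>k::nat. k \<ge> 1 \<Longrightarrow> norm (c (int k)) \<le> B * real k ^ D"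
proof -
  obtain D f where per: "\<And>d. d < D \<Longrightarrow> periodic_int (f d)"
    and c: "\<And>k. c k = (\<Sum>d<D. f d k * of_int k ^ d)"
    using assms unfolding quasi_poly_int_def by blast
  have "\<exists>B. \<forall>k. norm (f d k) \<le> B" if "d < D" for d
    using periodic_int_bounded[OF per[OF that]] by metis
  then obtain Bf where Bf: "\<And>d k. d < D \<Longrightarrow> norm (f d k) \<le> Bf d"
    by metis
  have "norm (c (int k)) \<le> (\<Sum>d<D. Bf d) * real k ^ D" if k: "k \<ge> 1" for k :: nat
  proof -
    have "norm (c (int k)) \<le> (\<Sum>d<D. norm (f d (int k)) * real k ^ d)"
      unfolding c using norm_sum by (fastforce simp: norm_mult norm_power intro: order_trans)
    also have "\<dots> \<le> (\<Sum>d<D. Bf d * real k ^ D)"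
    proof (rule sum_mono)
      fix d assume "d \<in> {..<D}"
      then show "norm (f d (int k)) * real k ^ d \<le> Bf d * real k ^ D"
        using Bf[of d "int k"] k
        by (intro mult_mono power_increasing) (auto intro: order_trans[OF norm_ge_zero])
    qed
    finally show ?thesis
      by (simp add: sum_distrib_right)
  qed
  then show ?thesis
    using that by blast
qed

lemma norm_Theta_pair_quasi_periodic_le:
  fixes W :: "int \<Rightarrow> int ^ 'n \<Rightarrow> complex"
  assumes W_shift: "\<And>l. W (int k) (l + \<mu>) = \<zeta> * W (int k) l" and \<zeta>: "norm \<zeta> = 1"
    and W_bound: "\<And>l. norm (W (int k) l) \<le> 1"
    and R: "R \<ge> 0" "{x. \<psi> x \<noteq> 0} \<subseteq> cball 0 R"
    and C: "\<And>x. norm ((fdiff ((1 / real k) *\<^sub>R lat \<mu>) ^^ M) \<psi> x) \<le> C * (1 / real k) ^ M"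
    and k: "k \<ge> 1"
  shows "norm (\<zeta> - 1) ^ M * norm (Theta_pair W k \<psi>)
    \<le> (real k * (2 * (R + real M * norm (lat \<mu>)) + 1)) ^ CARD('n) * (C * (1 / real k) ^ M)"
proof -
  define w where "w = (1 / real k) *\<^sub>R lat \<mu>"
  have "norm (lat \<mu>) \<le> norm (lat \<mu>) * real k"
    using k by (simp add: mult_le_cancel_left1)
  then have "norm w \<le> norm (lat \<mu>)"
    using k by (simp add: w_def divide_le_eq)
  then have "real M * norm w \<le> real M * norm (lat \<mu>)"
    by (rule mult_left_mono) simp
  then have "{x. (fdiff w ^^ M) \<psi> x \<noteq> 0} \<subseteq> cball 0 (R + real M * norm (lat \<mu>))"
    using fdiff_pow_support[OF R(2), where w=w and M=M] by (meson add_left_mono subset_cball subset_trans)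
  with C have "norm (Theta_pair W k ((fdiff w ^^ M) \<psi>))
      \<le> (real k * (2 * (R + real M * norm (lat \<mu>)) + 1)) ^ CARD('n) * (C * (1 / real k) ^ M)"
    using k R(1) by (intro norm_Theta_pair_le W_bound) (auto simp: w_def)
  moreover have "norm (Theta_pair W k ((fdiff w ^^ M) \<psi>)) = norm (\<zeta> - 1) ^ M * norm (Theta_pair W k \<psi>)"
    using arg_cong[OF Theta_pair_fdiff_pow[where W=W and k=k and M=M, OF W_shift R(2)], of norm] k \<zeta>
    by (simp add: w_def norm_mult norm_power)
  ultimately show ?thesis
    by simp
qed

lemma asymp_vanishes_quasi_periodic:
  fixes W :: "int \<Rightarrow> int ^ 'n \<Rightarrow> complex"
  assumes W_shift: "\<And>k l. W k (l + \<mu>) = \<zeta> * W k l"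
    and \<zeta>: "norm \<zeta> = 1" "\<zeta> \<noteq> 1" and W_bound: "\<And>k l. norm (W k l) \<le> 1"
  shows "asymp_vanishes W"
proof (rule asymp_vanishesI)
  fix \<psi> :: "real ^ 'n \<Rightarrow> complex" and N :: nat
  assume \<psi>: "test_function \<psi>"
  define n where "n = CARD('n)"
  define M where "M = N + n + 1"
  obtain C where C: "\<And>h x. norm ((fdiff (h *\<^sub>R lat \<mu>) ^^ M) \<psi> x) \<le> C * \<bar>h\<bar> ^ M"
    using fdiff_pow_bound[OF \<psi>] by blast
  obtain R where R: "R \<ge> 0" "{x. \<psi> x \<noteq> 0} \<subseteq> cball 0 R"
    using test_function_support_cball[OF \<psi>] by blast
  define d where "d = norm (\<zeta> - 1)"
  have d: "d > 0"
    using \<zeta>(2) by (simp add: d_def)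
  define K where "K = (2 * (R + real M * norm (lat \<mu>)) + 1) ^ n * C / d ^ M"
  have "norm (of_real (real k ^ N) * Theta_pair W k \<psi>) \<le> K / real k" if k: "k \<ge> 1" for k
  proof -
    have "d ^ M * norm (Theta_pair W k \<psi>)
        \<le> (real k * (2 * (R + real M * norm (lat \<mu>)) + 1)) ^ n * (C * (1 / real k) ^ M)"
      unfolding d_def n_def
      by (rule norm_Theta_pair_quasi_periodic_le[where W=W and k=k, OF W_shift \<zeta>(1) W_bound R _ k])
        (use C[of "1 / real k"] in simp)
    also have "\<dots> = d ^ M * (K / real k) / real k ^ N"
      using k d by (simp add: K_def M_def power_mult_distrib power_add power_one_over)
    finally show ?thesis
      using d k by (simp add: norm_mult norm_power field_simps)
  qed
  then have "\<forall>\<^sub>F k in sequentially. norm (of_real (real k ^ N) * Theta_pair W k \<psi>) \<le> K / real k"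
    by (intro eventually_sequentiallyI[of 1])
  moreover have "((\<lambda>k. K / real k) \<longlongrightarrow> 0) sequentially"
    by (rule tendsto_divide_0[OF tendsto_const filterlim_at_top_imp_at_infinity[OF filterlim_real_sequentially]])
  ultimately show "((\<lambda>k. of_real (real k ^ N) * Theta_pair W k \<psi>) \<longlongrightarrow> 0) sequentially"
    by (rule Lim_null_comparison)
qed

lemma mem_cone_PS_iff: "(t, x) \<in> cone_PS P \<sigma> \<longleftrightarrow> t > 0 \<and> (1 / t) *\<^sub>R (x - \<sigma>) \<in> P"
proof
  assume "(t, x) \<in> cone_PS P \<sigma>"
  then show "t > 0 \<and> (1 / t) *\<^sub>R (x - \<sigma>) \<in> P"
    unfolding cone_PS_def by auto
next
  assume "t > 0 \<and> (1 / t) *\<^sub>R (x - \<sigma>) \<in> P"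
  moreover have "x = t *\<^sub>R ((1 / t) *\<^sub>R (x - \<sigma>)) + \<sigma>" if "t > 0"
    using that by simp
  ultimately show "(t, x) \<in> cone_PS P \<sigma>"
    unfolding cone_PS_def by blast
qed

lemma cone_PS_translate:
  assumes "subspace L0" "\<forall>v\<in>P. \<forall>w\<in>L0. v + w \<in> P" "w \<in> L0"
  shows "(t, x + w) \<in> cone_PS P \<sigma> \<longleftrightarrow> (t, x) \<in> cone_PS P \<sigma>"
proof -
  have invariant: "v + c *\<^sub>R w \<in> P \<longleftrightarrow> v \<in> P" for v c
    using assms subspace_scale[OF assms(1,3), of c] subspace_neg[OF assms(1) subspace_scale[OF assms(1,3), of c]]
    by (metis add_diff_cancel diff_conv_add_uminus)
  have "(1 / t) *\<^sub>R (x + w - \<sigma>) = (1 / t) *\<^sub>R (x - \<sigma>) + (1 / t) *\<^sub>R w"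
    by (simp add: algebra_simps)
  then show ?thesis
    unfolding mem_cone_PS_iff by (simp add: invariant)
qed

lemma asymp_vanishes_quasi_poly_mult:
  fixes m :: "int \<Rightarrow> int ^ 'n \<Rightarrow> complex"
  assumes "quasi_poly_int c" "asymp_vanishes m"
  shows "asymp_vanishes (\<lambda>k l. c k * m k l)"
proof -
  obtain B D where "\<And>k::nat. k \<ge> 1 \<Longrightarrow> norm (c (int k)) \<le> B * real k ^ D"
    using quasi_poly_int_bounded[OF assms(1)] by blast
  then show ?thesis
    by (rule asymp_vanishes_mult_left[OF assms(2)])
qed

lemma asymp_vanishes_qpoly_poly_mult:
  fixes m :: "int \<Rightarrow> int ^ 'n \<Rightarrow> complex"
  assumes "qpoly_poly_in_lambda p" "asymp_vanishes m"
  shows "asymp_vanishes (\<lambda>k l. p k l * m k l)"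
proof -
  obtain D :: nat and c :: "nat \<Rightarrow> int \<Rightarrow> complex" and e :: "nat \<Rightarrow> 'n \<Rightarrow> nat"
    where c: "\<And>i. i < D \<Longrightarrow> quasi_poly_int (c i)"
      and p: "\<And>k l. p k l = (\<Sum>i<D. c i k * (\<Prod>j\<in>UNIV. of_int (l $ j) ^ e i j))"
    using assms(1) unfolding qpoly_poly_in_lambda_def by blast
  have "asymp_vanishes (\<lambda>k l. \<Sum>i<D. c i k * ((\<Prod>j\<in>UNIV. of_int (l $ j) ^ e i j) * m k l))"
    using c assms(2)
    by (intro asymp_vanishes_sum asymp_vanishes_quasi_poly_mult asymp_vanishes_monomial_mult) simp_all
  then show ?thesis
    by (simp add: p sum_distrib_right mult.assoc)
qed

lemma asymp_vanishes_character_cone: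
  fixes g :: "int ^ 'n \<Rightarrow> complex"
  assumes L0: "subspace L0" and P: "\<forall>v\<in>P. \<forall>w\<in>L0. v + w \<in> P"
    and g: "finite_order_character g" and \<mu>: "lat \<mu> \<in> L0" "g \<mu> \<noteq> 1"
  shows "asymp_vanishes (\<lambda>k l. g l * cone_indicator P \<sigma> k l)"
proof -
  have g_add: "\<And>a b. g (a + b) = g a * g b" and g_norm: "\<And>a. norm (g a) = 1"
    using g unfolding finite_order_character_def by auto
  show ?thesis
  proof (rule asymp_vanishes_quasi_periodic[where \<mu>=\<mu> and \<zeta>="g \<mu>"])
    show "g (l + \<mu>) * cone_indicator P \<sigma> k (l + \<mu>) = g \<mu> * (g l * cone_indicator P \<sigma> k l)" for k l
      using cone_PS_translate[OF L0 P \<mu>(1)] by (simp add: cone_indicator_def g_add)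
  qed (use g_norm \<mu>(2) in \<open>simp_all add: cone_indicator_def norm_mult\<close>)
qed

theorem proposition4p2:
  fixes P L0 :: "(real ^ 'n) set" and \<sigma> :: "real ^ 'n"
    and p :: "int \<Rightarrow> int ^ 'n \<Rightarrow> complex" and g :: "int ^ 'n \<Rightarrow> complex"
  assumes "rational_polyhedron P"
    and "rational_subspace L0"
    and "\<forall>v\<in>P. \<forall>w\<in>L0. v + w \<in> P"
    and "rat_vec \<sigma>"
    and "qpoly_poly_in_lambda p"
    and "finite_order_character g"
    and "\<exists>l1 l2. lat l1 \<in> L0 \<and> lat l2 \<in> L0 \<and> g l1 \<noteq> g l2"
  shows "asymp_vanishes (\<lambda>k l. g l * p k l * cone_indicator P \<sigma> k l)"
proof -
  have L0: "subspace L0"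
    using assms(2) unfolding rational_subspace_def by simp
  obtain l1 l2 where l12: "lat l1 \<in> L0" "lat l2 \<in> L0" "g l1 \<noteq> g l2"
    using assms(7) by blast
  have "lat (l1 - l2) \<in> L0"
    unfolding lat_diff by (rule subspace_diff[OF L0 l12(1,2)])
  moreover have "g (l1 - l2) \<noteq> 1"
    using l12(3) assms(6) unfolding finite_order_character_def by (metis diff_add_cancel mult_1)
  ultimately have "asymp_vanishes (\<lambda>k l. g l * cone_indicator P \<sigma> k l)"
    by (rule asymp_vanishes_character_cone[OF L0 assms(3) assms(6)])
  from asymp_vanishes_qpoly_poly_mult[OF assms(5) this] show ?thesis
    by (simp add: ac_simps)
qed

end
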